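(* Let $A\in\mathbb{R}^{n\times n}$ be symmetric (not necessarily PSD), let $L>0$, and assume every nonzero eigenvalue of $A$ has magnitude at least $L$. Let $S\in\mathbb{R}^{k\times n}$ satisfy Assumption L for $A$ with parameter $L$. Then for every $i$ with $\lambda_i(A)>0$, the matrix $SAS^T$ has at least $i$ eigenvalues and $\lambda_i(SAS^T)\ge\lambda_i(A)-51L$.
   Context: $\lambda_i(M)$ denotes the $i$-th largest eigenvalue of a symmetric matrix $M$. $S$ is an $\alpha$-distortion subspace embedding for $X$ (or its column span) if $(1-\alpha)\|Xv\|^2\le\|SXv\|^2\le(1+\alpha)\|Xv\|^2$ for all $v$. Assumption L (for symmetric $A$ and $L>0$): for every $\lambda\ge L$, $S$ is a $\min(L/\lambda,1/10)$-distortion subspace embedding for the span of all eigenvectors of $A$ whose eigenvalue has magnitude at least $\lambda$. *)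

theory Defs
  imports "Jordan_Normal_Form.Char_Poly" "HOL-Computational_Algebra.Polynomial" "HOL-Library.Multiset"
begin

definition eigvals_desc :: "real mat \<Rightarrow> real list" where
  "eigvals_desc M = rev (sorted_list_of_multiset (proots (char_poly M)))"

definition num_eigvals :: "real mat \<Rightarrow> nat" where
  "num_eigvals M = size (proots (char_poly M))"

(* lambda_i(M), i-th largest eigenvalue, 1-indexed *)
definition lam :: "real mat \<Rightarrow> nat \<Rightarrow> real" where
  "lam M i = eigvals_desc M ! (i - 1)"

definition eig_span :: "real mat \<Rightarrow> real \<Rightarrow> real vec set" where
  "eig_span A t = {x. \<exists>m (c :: nat \<Rightarrow> real) (v :: nat \<Rightarrow> real vec) (mu :: nat \<Rightarrow> real).
       (\<forall>j<m. eigenvector A (v j) (mu j) \<and> \<bar>mu j\<bar> \<ge> t) \<and>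
       x = finsum_vec TYPE(real) (dim_row A) (\<lambda>j. c j \<cdot>\<^sub>v v j) {..<m}}"

definition subspace_embedding :: "real mat \<Rightarrow> real \<Rightarrow> real vec set \<Rightarrow> bool" where
  "subspace_embedding S \<alpha> U = (\<forall>x\<in>U.
      (1 - \<alpha>) * (x \<bullet> x) \<le> (S *\<^sub>v x) \<bullet> (S *\<^sub>v x) \<and>
      (S *\<^sub>v x) \<bullet> (S *\<^sub>v x) \<le> (1 + \<alpha>) * (x \<bullet> x))"

definition assumption_L :: "real mat \<Rightarrow> real mat \<Rightarrow> real \<Rightarrow> bool" where
  "assumption_L S A L = (\<forall>t\<ge>L. subspace_embedding S (min (L / t) (1/10)) (eig_span A t))"

end

(*
  Diagonalize A = U diag(lambda) U^T and S A S^T = V diag(nu) V^T with orthogonal U, V, and let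
  t = lambda_i(A). If fewer than i eigenvalues nu_l were at least t - 51 L, a dimension count
  gives a nonzero g, supported on the eigenvalues with |lambda_j| >= t, such that y = S U g is
  orthogonal to the eigenvectors of those nu_l and the sketched coordinates
  rho_j = <S u_j, y> vanish whenever lambda_j <= -t. Then y^T S A S^T y < (t - 51 L) |y|^2.

  On the other hand y^T S A S^T y = sum_j lambda_j rho_j^2. Assumption L at level t, applied
  to g and polarized, shows that rho is close to g on the large eigenvalues, which contribute
  at least t (1 - eps)^2 |g|^2. Applied at every level s between L and t, it bounds the mass
  of rho on the small eigenvalues of magnitude >= s by O(L^2 |g|^2 / s^2), and an Abel
  summation bounds their total contribution by (2/5) L |g|^2. Since |y|^2 is within a factor
  1 +- eps of |g|^2, this forces y^T S A S^T y >= (t - 51 L) |y|^2, a contradiction.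
*)

theory Submission
  imports Defs "Jordan_Normal_Form.Schur_Decomposition"
begin

section \<open>Spectral theorem for real symmetric matrices\<close>

lemma symmetric_matD:
  assumes "A \<in> carrier_mat n n" and "A\<^sup>T = A" and "i < n" and "j < n"
  shows "A $$ (i, j) = A $$ (j, i)"
  by (metis assms index_transpose_mat(1) carrier_matD)

text \<open>For an eigenvector \<open>w\<close> with eigenvalue \<open>a\<close>, \<open>w\<^sup>* A w = a \<parallel>w\<parallel>\<^sup>2\<close>, and the left-hand side
  is real because \<open>A\<close> is real symmetric.\<close>

lemma real_symmetric_complex_eigenvalue_real:
  fixes A :: "real mat"
  assumes A: "A \<in> carrier_mat n n" and sym: "A\<^sup>T = A"
    and ev: "eigenvector (map_mat complex_of_real A) w a"
  shows "a \<in> \<real>"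
proof -
  have w: "w \<in> carrier_vec n" and w0: "w \<noteq> 0\<^sub>v n" and Aw: "map_mat complex_of_real A *\<^sub>v w = a \<cdot>\<^sub>v w"
    using ev A unfolding eigenvector_def by auto
  have row_eq: "(\<Sum>j<n. of_real (A $$ (i,j)) * w $ j) = a * w $ i" if i: "i < n" for i
  proof -
    have "(map_mat complex_of_real A *\<^sub>v w) $ i = (\<Sum>j<n. of_real (A $$ (i,j)) * w $ j)"
      using i A w by (auto simp: scalar_prod_def lessThan_atLeast0)
    thus ?thesis using Aw i w by simp
  qed
  define s where "s = (\<Sum>i<n. \<Sum>j<n. cnj (w $ i) * of_real (A $$ (i,j)) * w $ j)"
  define N where "N = (\<Sum>i<n. cnj (w $ i) * w $ i)"
  have s_eq: "s = a * N"
  proof -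
    have "s = (\<Sum>i<n. cnj (w $ i) * (\<Sum>j<n. of_real (A $$ (i,j)) * w $ j))"
      unfolding s_def by (simp add: sum_distrib_left mult.assoc)
    also have "\<dots> = (\<Sum>i<n. cnj (w $ i) * (a * w $ i))" using row_eq by simp
    also have "\<dots> = a * N" unfolding N_def by (simp add: sum_distrib_left algebra_simps)
    finally show ?thesis .
  qed
  have s_real: "cnj s = s"
  proof -
    have "cnj s = (\<Sum>i<n. \<Sum>j<n. w $ i * of_real (A $$ (i,j)) * cnj (w $ j))"
      unfolding s_def by (simp add: cnj_sum)
    also have "\<dots> = (\<Sum>j<n. \<Sum>i<n. w $ i * of_real (A $$ (i,j)) * cnj (w $ j))"
      by (rule sum.swap)
    also have "\<dots> = s" unfolding s_def
      by (intro sum.cong refl) (auto simp: symmetric_matD[OF A sym] mult.commute mult.left_commute)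
    finally show ?thesis .
  qed
  have "N \<noteq> 0"
  proof
    assume "N = 0"
    moreover have "Re N = (\<Sum>i<n. (cmod (w $ i))\<^sup>2)" unfolding N_def
      by (simp add: Re_sum complex_mult_cnj cmod_def power2_eq_square)
    ultimately have "(\<Sum>i<n. (cmod (w $ i))\<^sup>2) = 0" by simp
    hence "\<forall>i\<in>{..<n}. (cmod (w $ i))\<^sup>2 = 0" by (subst (asm) sum_nonneg_eq_0_iff) auto
    hence "w = 0\<^sub>v n" using w by (intro eq_vecI) auto
    thus False using w0 by simp
  qed
  moreover have "cnj N = N" unfolding N_def by (simp add: cnj_sum mult.commute)
  hence "cnj a * N = a * N" using s_eq s_real by (metis complex_cnj_mult)
  ultimately show ?thesis by (simp add: Reals_cnj_iff)
qed

lemma real_symmetric_eigenvalue_exists: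
  fixes A :: "real mat"
  assumes A: "A \<in> carrier_mat n n" and sym: "A\<^sup>T = A" and n: "n > 0"
  shows "\<exists>e. eigenvalue A e"
proof -
  define Ac where "Ac = map_mat complex_of_real A"
  have Ac: "Ac \<in> carrier_mat n n" using A unfolding Ac_def by auto
  from char_poly_factorized[OF Ac] obtain as where
    cp: "char_poly Ac = (\<Prod>a\<leftarrow>as. [:- a, 1:])" and len: "length as = n" by blast
  from len n obtain a rest where as: "as = a # rest" by (cases as) auto
  have root: "poly (char_poly Ac) a = 0" unfolding cp as by simp
  hence "eigenvalue Ac a" using eigenvalue_root_char_poly[OF Ac] by simp
  then obtain w where "eigenvector Ac w a" unfolding eigenvalue_def by blast
  hence "a \<in> \<real>" using real_symmetric_complex_eigenvalue_real[OF A sym] unfolding Ac_def by blast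
  then obtain r where ar: "a = of_real r" by (auto elim: Reals_cases)
  have "char_poly Ac = map_poly of_real (char_poly A)"
    unfolding Ac_def by (rule of_real_hom.char_poly_hom[OF A])
  hence "poly (char_poly A) r = 0"
    using root unfolding ar by (simp add: of_real_hom.poly_map_poly)
  hence "eigenvalue A r" using eigenvalue_root_char_poly[OF A] by simp
  thus ?thesis ..
qed

lemma orthonormal_completion:
  fixes v :: "real vec"
  assumes v: "v \<in> carrier_vec n" and v1: "v \<bullet> v = 1"
  shows "\<exists>W \<in> carrier_mat n n. W\<^sup>T * W = 1\<^sub>m n \<and> col W 0 = v"
proof -
  interpret cof_vec_space n "TYPE(real)" .
  have v0: "v \<noteq> 0\<^sub>v n" using v1 v by auto
  define b where "b = basis_completion v"
  from basis_completion[OF v v0, folded b_def]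
  have dist_b: "distinct b" and indep: "\<not> lin_dep (set b)" and b: "set b \<subseteq> carrier_vec n"
    and hdb: "hd b = v" and len_b: "length b = n" by auto
  have n: "n > 0" using len_b hdb v0 v by (cases b) auto
  from hdb len_b n obtain vs where bv: "b = v # vs" by (cases b) auto
  define ws where "ws = gram_schmidt n b"
  from gram_schmidt_result[OF b dist_b indep ws_def]
  have ws: "set ws \<subseteq> carrier_vec n" "corthogonal ws" "length ws = n" by (auto simp: len_b)
  from gram_schmidt_hd[OF v, of vs, folded bv] have hdws: "hd ws = v" unfolding ws_def .
  have wsc: "ws ! i \<in> carrier_vec n" if "i < n" for i using ws that by auto
  have orth: "(ws ! i \<bullet> ws ! j = 0) = (i \<noteq> j)" if "i < n" "j < n" for i j
    using corthogonalD[OF ws(2)] ws(3) that by simp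
  have pos: "ws ! i \<bullet> ws ! i > 0" if i: "i < n" for i
    using conjugate_square_ge_0_vec[of "ws ! i"] orth[OF i i] by simp
  define W where "W = mat_of_cols n (map (\<lambda>w. (1 / sqrt (w \<bullet> w)) \<cdot>\<^sub>v w) ws)"
  have W: "W \<in> carrier_mat n n" unfolding W_def using ws by auto
  have colW: "col W i = (1 / sqrt (ws ! i \<bullet> ws ! i)) \<cdot>\<^sub>v ws ! i" if "i < n" for i
    unfolding W_def using that ws wsc by (simp add: col_mat_of_cols)
  have "W\<^sup>T * W = 1\<^sub>m n"
  proof (rule eq_matI)
    fix i j assume "i < dim_row (1\<^sub>m n)" and "j < dim_col (1\<^sub>m n)"
    hence i: "i < n" and j: "j < n" by auto
    have "(W\<^sup>T * W) $$ (i,j) = col W i \<bullet> col W j" using W i j by simp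
    also have "\<dots> = (1 / sqrt (ws ! i \<bullet> ws ! i)) * (1 / sqrt (ws ! j \<bullet> ws ! j)) * (ws ! i \<bullet> ws ! j)"
      unfolding colW[OF i] colW[OF j] using wsc[OF i] wsc[OF j]
      by (simp add: smult_scalar_prod_distrib scalar_prod_smult_right)
    also have "\<dots> = 1\<^sub>m n $$ (i,j)"
      using orth[OF i j] pos[OF i] i j by (cases "i = j") (auto simp: field_simps)
    finally show "(W\<^sup>T * W) $$ (i,j) = 1\<^sub>m n $$ (i,j)" .
  qed (use W in auto)
  moreover have "col W 0 = v"
  proof -
    have "ws ! 0 = v" using hdws ws(3) n by (cases ws) auto
    thus ?thesis using colW[OF n] v1 by simp
  qed
  ultimately show ?thesis using W by blast
qed

lemma transpose_conj_symmetric: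
  fixes A W :: "'a :: comm_ring mat"
  assumes "A \<in> carrier_mat n n" and "A\<^sup>T = A" and "W \<in> carrier_mat n m"
  shows "(W\<^sup>T * A * W)\<^sup>T = W\<^sup>T * A * W"
proof -
  have "(W\<^sup>T * A * W)\<^sup>T = W\<^sup>T * (W\<^sup>T * A)\<^sup>T"
    by (rule transpose_mult) (use assms in auto)
  also have "(W\<^sup>T * A)\<^sup>T = A * W" using assms by (simp add: transpose_mult[of _ m n])
  also have "W\<^sup>T * (A * W) = W\<^sup>T * A * W" using assms by (intro assoc_mult_mat[symmetric]) auto
  finally show ?thesis .
qed

lemma assoc_mult_mat_4:
  assumes "A \<in> carrier_mat n n" "B \<in> carrier_mat n n" "C \<in> carrier_mat n n" "D \<in> carrier_mat n n"
  shows "(A * B) * (C * D) = A * (B * C) * D"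
  using assms by (simp add: assoc_mult_mat[of _ n n _ n _ n])

lemma orthogonal_deflation:
  fixes A W :: "real mat"
  assumes A: "A \<in> carrier_mat (Suc n) (Suc n)" and sym: "A\<^sup>T = A"
    and W: "W \<in> carrier_mat (Suc n) (Suc n)" and WW: "W\<^sup>T * W = 1\<^sub>m (Suc n)"
    and Av: "A *\<^sub>v col W 0 = e \<cdot>\<^sub>v col W 0"
  shows "\<exists>A3 \<in> carrier_mat n n. A3\<^sup>T = A3 \<and>
    W\<^sup>T * A * W = four_block_mat (mat 1 1 (\<lambda>_. e)) (0\<^sub>m 1 n) (0\<^sub>m n 1) A3"
proof -
  define A' where "A' = W\<^sup>T * A * W"
  have A': "A' \<in> carrier_mat (Suc n) (Suc n)" unfolding A'_def using W A by auto
  have symA': "A'\<^sup>T = A'" unfolding A'_def by (rule transpose_conj_symmetric[OF A sym W])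
  have col0: "A' $$ (i,0) = (if i = 0 then e else 0)" if i: "i < Suc n" for i
  proof -
    have "A' $$ (i,0) = row (W\<^sup>T * A) i \<bullet> col W 0" unfolding A'_def
      using i W A by (subst index_mult_mat(1)) auto
    also have "\<dots> = ((W\<^sup>T * A) *\<^sub>v col W 0) $ i" using i W A by simp
    also have "(W\<^sup>T * A) *\<^sub>v col W 0 = W\<^sup>T *\<^sub>v (A *\<^sub>v col W 0)"
      using W A col_dim[of W 0] by (intro assoc_mult_mat_vec) auto
    also have "\<dots> = e \<cdot>\<^sub>v (W\<^sup>T *\<^sub>v col W 0)"
      unfolding Av by (rule mult_mat_vec) (use W col_dim[of W 0] in auto)
    also have "(e \<cdot>\<^sub>v (W\<^sup>T *\<^sub>v col W 0)) $ i = e * (W\<^sup>T * W) $$ (i,0)" using i W by simp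
    finally show ?thesis unfolding WW using i by simp
  qed
  define A3 where "A3 = mat n n (\<lambda>(i,j). A' $$ (Suc i, Suc j))"
  have A3: "A3 \<in> carrier_mat n n" unfolding A3_def by simp
  have "A3\<^sup>T = A3" unfolding A3_def by (rule eq_matI) (auto simp: symmetric_matD[OF A' symA'])
  moreover have "A' = four_block_mat (mat 1 1 (\<lambda>_. e)) (0\<^sub>m 1 n) (0\<^sub>m n 1) A3"
  proof (rule eq_matI)
    fix i j assume "i < dim_row (four_block_mat (mat 1 1 (\<lambda>_. e)) (0\<^sub>m 1 n) (0\<^sub>m n 1) A3)"
      and "j < dim_col (four_block_mat (mat 1 1 (\<lambda>_. e)) (0\<^sub>m 1 n) (0\<^sub>m n 1) A3)"
    hence i: "i < Suc n" and j: "j < Suc n" using A3 by auto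
    show "A' $$ (i,j) = four_block_mat (mat 1 1 (\<lambda>_. e)) (0\<^sub>m 1 n) (0\<^sub>m n 1) A3 $$ (i,j)"
    proof (cases "i = 0 \<or> j = 0")
      case True
      thus ?thesis using col0[OF i] col0[OF j] symmetric_matD[OF A' symA' i j] i j A3 by auto
    next
      case False
      then obtain i' j' where "i = Suc i'" "j = Suc j'" by (cases i; cases j) auto
      thus ?thesis using i j A3 unfolding A3_def by auto
    qed
  qed (use A' A3 in auto)
  ultimately show ?thesis using A3 unfolding A'_def by blast
qed

lemma orthogonal_block_diagonalization:
  fixes A3 U3 :: "real mat"
  assumes U3: "U3 \<in> carrier_mat n n" and UU3: "U3\<^sup>T * U3 = 1\<^sub>m n" and A3: "A3 \<in> carrier_mat n n"
    and D3: "U3\<^sup>T * A3 * U3 = mat_diag n ((!) es)"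
  defines "B \<equiv> four_block_mat (1\<^sub>m 1) (0\<^sub>m 1 n) (0\<^sub>m n 1) U3"
  shows "B\<^sup>T * B = 1\<^sub>m (Suc n)"
    and "B\<^sup>T * four_block_mat (mat 1 1 (\<lambda>_. e)) (0\<^sub>m 1 n) (0\<^sub>m n 1) A3 * B
           = mat_diag (Suc n) ((!) (e # es))"
proof -
  have U3T: "U3\<^sup>T \<in> carrier_mat n n" using U3 by simp
  have BT: "B\<^sup>T = four_block_mat (1\<^sub>m 1) (0\<^sub>m 1 n) (0\<^sub>m n 1) U3\<^sup>T"
    unfolding B_def using U3 by (simp add: transpose_four_block_mat[of _ 1 1 _ n _ n])
  show "B\<^sup>T * B = 1\<^sub>m (Suc n)"
    unfolding BT unfolding B_def
    by (subst mult_four_block_mat[OF one_carrier_mat zero_carrier_mat zero_carrier_mat U3T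
      one_carrier_mat zero_carrier_mat zero_carrier_mat U3])
      (use U3 UU3 four_block_one_mat[of 1 n] in simp)
  show "B\<^sup>T * four_block_mat (mat 1 1 (\<lambda>_. e)) (0\<^sub>m 1 n) (0\<^sub>m n 1) A3 * B
      = mat_diag (Suc n) ((!) (e # es))"
    unfolding BT unfolding B_def
    apply (subst mult_four_block_mat[OF one_carrier_mat zero_carrier_mat zero_carrier_mat U3T
      _ zero_carrier_mat zero_carrier_mat A3])
     apply simp
    apply (subst mult_four_block_mat[OF _ _ _ _ one_carrier_mat zero_carrier_mat zero_carrier_mat U3])
    using U3 A3 D3 by (auto intro!: eq_matI simp: mat_diag_def)
qed

lemma real_symmetric_orthogonal_diagonalization:
  fixes A :: "real mat"
  assumes "A \<in> carrier_mat n n" and "A\<^sup>T = A"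
  shows "\<exists>U es. U \<in> carrier_mat n n \<and> U\<^sup>T * U = 1\<^sub>m n \<and> length es = n \<and>
           U\<^sup>T * A * U = mat_diag n ((!) es)"
  using assms
proof (induction n arbitrary: A)
  case 0
  show ?case by (intro exI[of _ "1\<^sub>m 0"] exI[of _ "[]"]) (use 0 in \<open>auto intro!: eq_matI simp: mat_diag_def\<close>)
next
  case (Suc n)
  have A: "A \<in> carrier_mat (Suc n) (Suc n)" and sym: "A\<^sup>T = A" by fact+
  obtain e v0 where "eigenvector A v0 e"
    using real_symmetric_eigenvalue_exists[OF A sym] unfolding eigenvalue_def by auto
  hence v0: "v0 \<in> carrier_vec (Suc n)" "v0 \<noteq> 0\<^sub>v (Suc n)" "A *\<^sub>v v0 = e \<cdot>\<^sub>v v0"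
    using A unfolding eigenvector_def by auto
  have pos: "v0 \<bullet> v0 > 0" using conjugate_square_greater_0_vec[OF v0(1)] v0(2) by simp
  define v where "v = (1 / sqrt (v0 \<bullet> v0)) \<cdot>\<^sub>v v0"
  have v: "v \<in> carrier_vec (Suc n)" unfolding v_def using v0 by simp
  have "v \<bullet> v = 1" unfolding v_def using v0(1) pos
    by (simp add: smult_scalar_prod_distrib scalar_prod_smult_right)
  then obtain W where W: "W \<in> carrier_mat (Suc n) (Suc n)"
    and WW: "W\<^sup>T * W = 1\<^sub>m (Suc n)" and Wv: "col W 0 = v"
    using orthonormal_completion[OF v] by blast
  have "A *\<^sub>v col W 0 = e \<cdot>\<^sub>v col W 0" unfolding Wv v_def using v0 A
    by (simp add: mult_mat_vec smult_smult_assoc mult.commute)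
  then obtain A3 where A3: "A3 \<in> carrier_mat n n" and symA3: "A3\<^sup>T = A3"
    and A': "W\<^sup>T * A * W = four_block_mat (mat 1 1 (\<lambda>_. e)) (0\<^sub>m 1 n) (0\<^sub>m n 1) A3"
    using orthogonal_deflation[OF A sym W WW] by blast
  obtain U3 es3 where U3: "U3 \<in> carrier_mat n n" and UU3: "U3\<^sup>T * U3 = 1\<^sub>m n"
    and les3: "length es3 = n" and D3: "U3\<^sup>T * A3 * U3 = mat_diag n ((!) es3)"
    using Suc.IH[OF A3 symA3] by blast
  define B where "B = four_block_mat (1\<^sub>m 1) (0\<^sub>m 1 n) (0\<^sub>m n 1) U3"
  note BB = orthogonal_block_diagonalization[OF U3 UU3 A3 D3, folded B_def]
    orthogonal_block_diagonalization(2)[OF U3 UU3 A3 D3, of e, folded B_def]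
  have B: "B \<in> carrier_mat (Suc n) (Suc n)" unfolding B_def using U3 by auto
  have WBT: "(W * B)\<^sup>T = B\<^sup>T * W\<^sup>T" using W B by (simp add: transpose_mult)
  have "(W * B)\<^sup>T * (W * B) = B\<^sup>T * (W\<^sup>T * W) * B"
    unfolding WBT using W B by (intro assoc_mult_mat_4) auto
  moreover have "(W * B)\<^sup>T * A * (W * B) = B\<^sup>T * (W\<^sup>T * A * W) * B"
  proof -
    have "(W * B)\<^sup>T * A = B\<^sup>T * (W\<^sup>T * A)"
      unfolding WBT using W B A by (intro assoc_mult_mat) auto
    thus ?thesis using W B A by (simp add: assoc_mult_mat_4[of "B\<^sup>T" "Suc n"])
  qed
  ultimately show ?case using BB W B les3 unfolding WW A'
    by (intro exI[of _ "W * B"] exI[of _ "e # es3"]) auto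
qed

lemma proots_prod_linear_factors: "proots (\<Prod>a\<leftarrow>es. [:- a, 1:]) = mset (es :: real list)"
proof (induction es)
  case (Cons a es)
  have "(\<Prod>a\<leftarrow>es. [:- a, 1:]) \<noteq> 0" by (auto simp: prod_list_zero_iff)
  hence "proots ([:- a, 1:] * (\<Prod>a\<leftarrow>es. [:- a, 1:])) = proots [:- a, 1:] + mset es"
    using Cons by (subst proots_mult) auto
  thus ?case using proots_linear_factor[of "-a"] by simp
qed simp

lemma real_symmetric_spectral_decomposition:
  fixes A :: "real mat"
  assumes A: "A \<in> carrier_mat n n" and sym: "A\<^sup>T = A"
  obtains U es where "U \<in> carrier_mat n n" "U\<^sup>T * U = 1\<^sub>m n" "U * U\<^sup>T = 1\<^sub>m n" "length es = n"
    "A = U * mat_diag n ((!) es) * U\<^sup>T" "mset es = proots (char_poly A)"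
proof -
  obtain U es where U: "U \<in> carrier_mat n n" and UU: "U\<^sup>T * U = 1\<^sub>m n" and les: "length es = n"
    and D: "U\<^sup>T * A * U = mat_diag n ((!) es)"
    using real_symmetric_orthogonal_diagonalization[OF A sym] by blast
  have UT: "U\<^sup>T \<in> carrier_mat n n" using U by simp
  have UU': "U * U\<^sup>T = 1\<^sub>m n" by (rule mat_mult_left_right_inverse[OF UT U UU])
  have "A = (U * U\<^sup>T) * A * (U * U\<^sup>T)" unfolding UU' using A by simp
  also have "(U * U\<^sup>T) * A = U * (U\<^sup>T * A)"
    by (rule assoc_mult_mat[of _ n n _ n _ n]) (use U A in auto)
  also have "U * (U\<^sup>T * A) * (U * U\<^sup>T) = U * (U\<^sup>T * A * U) * U\<^sup>T"
    by (rule assoc_mult_mat_4[of _ n]) (use U A in auto)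
  finally have AD: "A = U * mat_diag n ((!) es) * U\<^sup>T" unfolding D .
  have "similar_mat_wit A (mat_diag n ((!) es)) U U\<^sup>T"
    unfolding similar_mat_wit_def Let_def using A U UT UU UU' AD by auto
  hence "similar_mat A (mat_diag n ((!) es))" unfolding similar_mat_def by blast
  hence "char_poly A = char_poly (mat_diag n ((!) es))" by (rule char_poly_similar)
  also have "\<dots> = (\<Prod>a\<leftarrow>diag_mat (mat_diag n ((!) es)). [:- a, 1:])"
    by (rule char_poly_upper_triangular[of _ n]) (auto simp: mat_diag_def upper_triangular_def)
  also have "diag_mat (mat_diag n ((!) es)) = es"
    by (rule nth_equalityI) (auto simp: diag_mat_def mat_diag_def les)
  finally have "mset es = proots (char_poly A)" by (simp add: proots_prod_linear_factors)
  with that U UU UU' les AD show ?thesis .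
qed

lemma eigvals_from_spectrum:
  assumes "mset es = proots (char_poly M)"
  shows "num_eigvals M = length es" and "lam M i = rev (sort es) ! (i - 1)"
   apply (simp add: num_eigvals_def flip: assms)
  by (simp add: lam_def eigvals_desc_def sorted_list_of_multiset_mset flip: assms)

lemma eigenvector_col_spectral:
  fixes A U :: "real mat"
  assumes U: "U \<in> carrier_mat n n" and UU: "U\<^sup>T * U = 1\<^sub>m n"
    and AD: "A = U * mat_diag n f * U\<^sup>T" and j: "j < n"
  shows "eigenvector A (col U j) (f j)"
proof -
  have A: "A \<in> carrier_mat n n" unfolding AD using U by (meson mat_diag_dim mult_carrier_mat transpose_carrier_mat)
  have "A * U = (U * mat_diag n f) * (U\<^sup>T * U)" unfolding AD
    by (rule assoc_mult_mat[of _ n n _ n _ n]) (use U in auto)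
  moreover have "U * mat_diag n f \<in> carrier_mat n n" using U by simp
  ultimately have "A * U = U * mat_diag n f" unfolding UU by (simp add: right_mult_one_mat[of _ n n])
  hence "A *\<^sub>v col U j = col (U * mat_diag n f) j" using col_mult2[OF A U j] by simp
  also have "\<dots> = f j \<cdot>\<^sub>v col U j" using U j by (auto simp: mat_diag_mult_right[OF U])
  finally have "A *\<^sub>v col U j = f j \<cdot>\<^sub>v col U j" .
  moreover have "col U j \<bullet> col U j = (U\<^sup>T * U) $$ (j,j)" using U j by simp
  hence "col U j \<bullet> col U j = 1" unfolding UU using j by simp
  hence "col U j \<noteq> 0\<^sub>v n" using U j by auto
  ultimately show ?thesis unfolding eigenvector_def using U j A by auto
qed

lemma scalar_prod_mult_mat_vec_cols:
  fixes U :: "real mat"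
  assumes U: "U \<in> carrier_mat m n" and q: "q \<in> carrier_vec m" and h: "h \<in> carrier_vec n"
  shows "q \<bullet> (U *\<^sub>v h) = (\<Sum>j<n. h $ j * (col U j \<bullet> q))"
proof -
  have "q \<bullet> (U *\<^sub>v h) = (U\<^sup>T *\<^sub>v q) \<bullet> h" using transpose_vec_mult_scalar[OF U h q] by simp
  also have "\<dots> = (\<Sum>j<n. h $ j * (col U j \<bullet> q))"
    using h U q by (auto simp: scalar_prod_def lessThan_atLeast0 intro!: sum.cong)
  finally show ?thesis .
qed

lemma orthogonal_mat_col_coord:
  fixes U :: "real mat"
  assumes U: "U \<in> carrier_mat n n" and UU: "U\<^sup>T * U = 1\<^sub>m n" and g: "g \<in> carrier_vec n"
    and j: "j < n"
  shows "col U j \<bullet> (U *\<^sub>v g) = g $ j"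
proof -
  have "col U j \<bullet> (U *\<^sub>v g) = ((U\<^sup>T * U) *\<^sub>v g) $ j"
    using U g j by (simp add: assoc_mult_mat_vec[of _ n n _ n])
  thus ?thesis unfolding UU using g j by simp
qed

lemma orthogonal_mat_preserves_norm:
  fixes U :: "real mat"
  assumes U: "U \<in> carrier_mat n n" and UU: "U\<^sup>T * U = 1\<^sub>m n" and g: "g \<in> carrier_vec n"
  shows "(U *\<^sub>v g) \<bullet> (U *\<^sub>v g) = g \<bullet> g"
proof -
  have "(U *\<^sub>v g) \<bullet> (U *\<^sub>v g) = (\<Sum>j<n. g $ j * g $ j)"
    using scalar_prod_mult_mat_vec_cols[OF U _ g, of "U *\<^sub>v g"] U g
    by (simp add: orthogonal_mat_col_coord[OF U UU g])
  thus ?thesis using g by (simp add: scalar_prod_def lessThan_atLeast0)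
qed

lemma quadratic_form_spectral:
  fixes A U :: "real mat"
  assumes U: "U \<in> carrier_mat n n" and AD: "A = U * mat_diag n f * U\<^sup>T" and z: "z \<in> carrier_vec n"
  shows "z \<bullet> (A *\<^sub>v z) = (\<Sum>j<n. f j * (col U j \<bullet> z)\<^sup>2)"
proof -
  define w where "w = U\<^sup>T *\<^sub>v z"
  have w: "w \<in> carrier_vec n" unfolding w_def using U z by simp
  have wj: "w $ j = col U j \<bullet> z" if "j < n" for j unfolding w_def using U z that by simp
  have "(\<Sum>l = 0..<n. (if j = l then f l else 0) * w $ l) = f j * w $ j" if "j < n" for j
  proof -
    have "(\<Sum>l = 0..<n. (if j = l then f l else 0) * w $ l) = (\<Sum>l = 0..<n. if j = l then f j * w $ l else 0)"
      by (rule sum.cong) auto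
    thus ?thesis using that by simp
  qed
  hence Dw: "mat_diag n f *\<^sub>v w = vec n (\<lambda>j. f j * w $ j)"
    using w by (auto simp: mat_diag_def scalar_prod_def intro!: eq_vecI)
  have "z \<bullet> (A *\<^sub>v z) = z \<bullet> (U *\<^sub>v (mat_diag n f *\<^sub>v w))"
    unfolding AD w_def using U z by (simp add: assoc_mult_mat_vec[of _ n n _ n])
  also have "\<dots> = w \<bullet> (mat_diag n f *\<^sub>v w)"
    using transpose_vec_mult_scalar[OF U mult_mat_vec_carrier[OF mat_diag_dim w] z]
    unfolding w_def by simp
  also have "\<dots> = (\<Sum>j<n. f j * (col U j \<bullet> z)\<^sup>2)"
    unfolding Dw using w by (simp add: scalar_prod_def lessThan_atLeast0 wj power2_eq_square
      mult.left_commute)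
  finally show ?thesis .
qed

lemma norm_spectral:
  fixes U :: "real mat"
  assumes U: "U \<in> carrier_mat n n" and UU: "U * U\<^sup>T = 1\<^sub>m n" and z: "z \<in> carrier_vec n"
  shows "z \<bullet> z = (\<Sum>j<n. (col U j \<bullet> z)\<^sup>2)"
  using quadratic_form_spectral[OF U _ z, of "1\<^sub>m n" "\<lambda>_. 1"] U UU z by simp

lemma quadratic_form_le_if_orthogonal_to_top:
  fixes M V :: "real mat"
  assumes V: "V \<in> carrier_mat k k" and VV: "V * V\<^sup>T = 1\<^sub>m k" and MD: "M = V * mat_diag k f * V\<^sup>T"
    and y: "y \<in> carrier_vec k" and orth: "\<And>l. l < k \<Longrightarrow> c \<le> f l \<Longrightarrow> col V l \<bullet> y = 0"
  shows "y \<bullet> (M *\<^sub>v y) \<le> c * (y \<bullet> y)"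
proof -
  have "y \<bullet> (M *\<^sub>v y) = (\<Sum>l<k. f l * (col V l \<bullet> y)\<^sup>2)" by (rule quadratic_form_spectral[OF V MD y])
  also have "\<dots> \<le> (\<Sum>l<k. c * (col V l \<bullet> y)\<^sup>2)"
  proof (rule sum_mono)
    fix l assume "l \<in> {..<k}"
    thus "f l * (col V l \<bullet> y)\<^sup>2 \<le> c * (col V l \<bullet> y)\<^sup>2"
      using orth[of l] by (cases "c \<le> f l") (auto intro: mult_right_mono)
  qed
  also have "\<dots> = c * (y \<bullet> y)" by (simp add: sum_distrib_left norm_spectral[OF V VV y])
  finally show ?thesis .
qed

section \<open>Counting entries of a list against its decreasing rearrangement\<close>

lemma card_eq_length_filter_rev_sort:
  fixes xs :: "real list"
  shows "card {j. j < length xs \<and> P (xs ! j)} = length (filter P (rev (sort xs)))"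
proof -
  have "card {j. j < length xs \<and> P (xs ! j)} = length (filter P xs)"
    by (simp add: length_filter_conv_card)
  also have "\<dots> = length (filter P (rev (sort xs)))"
    by (metis mset_filter mset_rev mset_sort size_mset)
  finally show ?thesis .
qed

lemma rev_sort_antimono:
  fixes xs :: "real list"
  assumes "p \<le> q" "q < length xs"
  shows "rev (sort xs) ! q \<le> rev (sort xs) ! p"
proof -
  have s: "sorted (sort xs)" by simp
  have "rev (sort xs) ! q = sort xs ! (length xs - Suc q)" using assms by (simp add: rev_nth)
  moreover have "rev (sort xs) ! p = sort xs ! (length xs - Suc p)" using assms by (simp add: rev_nth)
  moreover have "sort xs ! (length xs - Suc q) \<le> sort xs ! (length xs - Suc p)"
    by (rule sorted_nth_mono[OF s]) (use assms in auto)
  ultimately show ?thesis by simp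
qed

lemma card_ge_nth_rev_sort:
  fixes xs :: "real list"
  assumes i1: "1 \<le> i" and il: "i \<le> length xs"
  shows "i \<le> card {j. j < length xs \<and> rev (sort xs) ! (i-1) \<le> xs ! j}"
proof -
  define ys where "ys = rev (sort xs)"
  have ly: "length ys = length xs" unfolding ys_def by simp
  let ?P = "\<lambda>x. ys ! (i-1) \<le> x"
  have "filter ?P (take i ys) = take i ys"
  proof (rule filter_True, intro ballI)
    fix x assume "x \<in> set (take i ys)"
    then obtain q where q: "q < length (take i ys)" "x = take i ys ! q" by (metis in_set_conv_nth)
    hence "q < i" "q < length ys" by auto
    hence "ys ! q \<ge> ys ! (i-1)" unfolding ys_def using rev_sort_antimono[of q "i-1" xs] il ly i1
      by (simp add: ys_def)
    thus "?P x" using q by simp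
  qed
  hence eqi: "length (filter ?P (take i ys)) = i" using il ly by simp
  have le: "length (filter ?P (take i ys)) \<le> length (filter ?P ys)"
  proof -
    have "ys = take i ys @ drop i ys" by simp
    hence "length (filter ?P ys) = length (filter ?P (take i ys)) + length (filter ?P (drop i ys))"
      by (metis filter_append length_append)
    thus ?thesis by simp
  qed
  have "card {j. j < length xs \<and> ?P (xs ! j)} = length (filter ?P ys)"
    using card_eq_length_filter_rev_sort[of xs ?P] unfolding ys_def .
  thus ?thesis using eqi le unfolding ys_def by simp
qed

lemma nth_rev_sort_ge_if_card_ge:
  fixes xs :: "real list"
  assumes i1: "1 \<le> i" and ic: "i \<le> card {j. j < length xs \<and> c \<le> xs ! j}"
  shows "i \<le> length xs \<and> c \<le> rev (sort xs) ! (i - 1)"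
proof -
  have "card {j. j < length xs \<and> c \<le> xs ! j} \<le> card {..<length xs}"
    by (rule card_mono) auto
  hence il: "i \<le> length xs" using ic by simp
  define ys where "ys = rev (sort xs)"
  have ly: "length ys = length xs" unfolding ys_def by simp
  let ?P = "\<lambda>x. c \<le> x"
  have cnt: "i \<le> length (filter ?P ys)" using ic card_eq_length_filter_rev_sort[of xs ?P] unfolding ys_def by simp
  have "c \<le> ys ! (i - 1)"
  proof (rule ccontr)
    assume "\<not> c \<le> ys ! (i - 1)"
    hence lt: "ys ! (i-1) < c" by simp
    have "filter ?P (drop (i-1) ys) = []"
    proof (rule filter_False, intro ballI)
      fix x assume "x \<in> set (drop (i-1) ys)"
      then obtain q where q: "q < length (drop (i-1) ys)" "x = drop (i-1) ys ! q" by (metis in_set_conv_nth)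
      hence "x = ys ! (i - 1 + q)" "i - 1 + q < length ys" by auto
      hence "x \<le> ys ! (i-1)" unfolding ys_def using rev_sort_antimono[of "i-1" "i-1+q" xs] ly
        by (simp add: ys_def)
      thus "\<not> ?P x" using lt by simp
    qed
    moreover have "ys = take (i-1) ys @ drop (i-1) ys" by simp
    ultimately have "length (filter ?P ys) = length (filter ?P (take (i-1) ys))"
      by (metis append_Nil2 filter_append)
    also have "\<dots> \<le> length (take (i-1) ys)" by (rule length_filter_le)
    also have "\<dots> \<le> i - 1" by simp
    finally show False using cnt i1 by simp
  qed
  thus ?thesis using il unfolding ys_def by simp
qed

lemma abel_step_arith:
  fixes K u v :: real
  assumes K: "K \<ge> 0" and v: "0 < v" and vu: "v \<le> u"
  shows "(u - v) * (K / u^2) + K / u \<le> K / v"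
proof -
  have u: "u > 0" using v vu by simp
  have "0 \<le> (u-v)^2" by simp
  hence e: "(2*u - v) * v \<le> u^2" by (simp add: power2_eq_square algebra_simps)
  have "(2*u - v)/u^2 = ((2*u-v)*v)/(u^2*v)" using v by simp
  also have "\<dots> \<le> u^2/(u^2*v)" by (rule divide_right_mono[OF e]) (use u v in simp)
  also have "\<dots> = 1/v" using u by simp
  finally have f: "(2*u - v)/u^2 \<le> 1/v" .
  have "K / u = K * u / u^2" using u by (simp add: power2_eq_square)
  hence "(u - v) * (K / u^2) + K / u = ((u - v) * K + K * u) / u^2" by (simp add: add_divide_distrib)
  also have "\<dots> = K * ((2*u - v)/u^2)" by (simp add: algebra_simps)
  also have "\<dots> \<le> K * (1/v)" by (rule mult_left_mono[OF f K])
  finally show ?thesis by simp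
qed

lemma first_moment_le_of_tail_bound_aux:
  fixes a p :: "nat \<Rightarrow> real" and K D b :: real
  assumes "finite J" and "\<forall>j\<in>J. 0 \<le> p j" and "0 < D" and "0 \<le> K"
    and "\<forall>t>0. (\<Sum>j\<in>{j\<in>J. t \<le> a j}. p j) \<le> K / (t + D)^2"
    and "0 \<le> b" and "\<forall>j\<in>J. b < a j"
  shows "(\<Sum>j\<in>J. (a j - b) * p j) \<le> K / (b + D)"
  using assms
proof (induction "card J" arbitrary: J b rule: less_induct)
  case less
  note fin = less.prems(1) and p = less.prems(2) and D = less.prems(3) and K = less.prems(4)
    and tail = less.prems(5) and b = less.prems(6) and ab = less.prems(7)
  show ?case
  proof (cases "J = {}")
    case True thus ?thesis using K D b by simp
  next
    case False
    \<comment> \<open>Abel summation: split off the smallest value \<open>a0\<close> of \<open>a\<close> and recurse on the rest\<close>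
    define a0 where "a0 = Min (a ` J)"
    define J' where "J' = {j\<in>J. a0 < a j}"
    have a0J: "a0 \<in> a ` J" and a0_le: "\<forall>j\<in>J. a0 \<le> a j" unfolding a0_def using fin False by auto
    hence b_a0: "b < a0" using ab by auto
    have J'J: "J' \<subset> J" using a0J unfolding J'_def by auto
    have tail': "\<forall>t>0. (\<Sum>j\<in>{j\<in>J'. t \<le> a j}. p j) \<le> K / (t + D)^2"
    proof (intro allI impI)
      fix t :: real assume "t > 0"
      have "(\<Sum>j\<in>{j\<in>J'. t \<le> a j}. p j) \<le> (\<Sum>j\<in>{j\<in>J. t \<le> a j}. p j)"
        using fin J'J p by (intro sum_mono2) auto
      also have "\<dots> \<le> K / (t + D)^2" using tail \<open>t > 0\<close> by auto
      finally show "(\<Sum>j\<in>{j\<in>J'. t \<le> a j}. p j) \<le> K / (t + D)^2" .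
    qed
    have "finite J'" "\<forall>j\<in>J'. 0 \<le> p j" "0 \<le> a0" "\<forall>j\<in>J'. a0 < a j"
      using fin J'J p b b_a0 finite_subset unfolding J'_def by auto
    hence IH: "(\<Sum>j\<in>J'. (a j - a0) * p j) \<le> K / (a0 + D)"
      using less.hyps[OF psubset_card_mono[OF fin J'J] _ _ D K tail'] by blast
    have "(\<Sum>j\<in>{j\<in>J. a0 \<le> a j}. p j) \<le> K / (a0 + D)^2" using tail b b_a0 by simp
    moreover have "{j\<in>J. a0 \<le> a j} = J" using a0_le by auto
    ultimately have mass: "(\<Sum>j\<in>J. p j) \<le> K / (a0 + D)^2" by simp
    have "(\<Sum>j\<in>J. (a j - b) * p j) = (\<Sum>j\<in>J. (a0 - b) * p j) + (\<Sum>j\<in>J. (a j - a0) * p j)"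
      by (simp add: sum.distrib[symmetric] algebra_simps)
    also have "(\<Sum>j\<in>J. (a j - a0) * p j) = (\<Sum>j\<in>J'. (a j - a0) * p j)"
      using a0_le J'J by (intro sum.mono_neutral_right[OF fin]) (auto simp: J'_def)
    also have "(\<Sum>j\<in>J. (a0 - b) * p j) \<le> (a0 - b) * (K / (a0 + D)^2)"
      unfolding sum_distrib_left[symmetric] using mass b_a0 by (intro mult_left_mono) auto
    finally have "(\<Sum>j\<in>J. (a j - b) * p j) \<le> ((a0 + D) - (b + D)) * (K / (a0 + D)^2) + K / (a0 + D)"
      using IH by simp
    also have "\<dots> \<le> K / (b + D)"
      by (rule abel_step_arith) (use K D b b_a0 in auto)
    finally show ?thesis .
  qed
qed

lemma first_moment_le_of_tail_bound:
  fixes a p :: "nat \<Rightarrow> real" and K D :: real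
  assumes "D > 0" "K \<ge> 0" "finite J" "\<forall>j\<in>J. p j \<ge> 0" "\<forall>j\<in>J. a j > 0"
    "\<forall>t>0. (\<Sum>j\<in>{j\<in>J. a j \<ge> t}. p j) \<le> K / (t + D)^2"
  shows "(\<Sum>j\<in>J. a j * p j) \<le> K / D"
  using first_moment_le_of_tail_bound_aux[OF assms(3,4,1,2,6), of 0] assms(5) by simp

lemma sum_sq_add_ge_of_perturbation:
  fixes g c :: "nat \<Rightarrow> real"
  assumes e: "\<epsilon> > 0" and e1: "\<epsilon> \<le> 1" and C: "(\<Sum>j\<in>E. (c j)^2) \<le> \<epsilon>^2 * (\<Sum>j\<in>E. (g j)^2)"
  shows "(\<Sum>j\<in>E. (g j + c j)^2) \<ge> (1 - \<epsilon>)^2 * (\<Sum>j\<in>E. (g j)^2)"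
proof -
  have trm: "\<And>j. (g j + c j)^2 \<ge> (1 - \<epsilon>) * (g j)^2 + (1 - 1/\<epsilon>) * (c j)^2"
  proof -
    fix j
    have "(g j + c j)^2 - ((1 - \<epsilon>) * (g j)^2 + (1 - 1/\<epsilon>) * (c j)^2) = (\<epsilon> * g j + c j)^2 / \<epsilon>"
      using e by (simp add: field_simps power2_eq_square)
    also have "\<dots> \<ge> 0" using e by simp
    finally show "(g j + c j)^2 \<ge> (1 - \<epsilon>) * (g j)^2 + (1 - 1/\<epsilon>) * (c j)^2" by simp
  qed
  define G where "G = (\<Sum>j\<in>E. (g j)^2)"
  define CC where "CC = (\<Sum>j\<in>E. (c j)^2)"
  have "(\<Sum>j\<in>E. (g j + c j)^2) \<ge> (\<Sum>j\<in>E. (1 - \<epsilon>) * (g j)^2 + (1 - 1/\<epsilon>) * (c j)^2)"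
    by (rule sum_mono) (rule trm)
  also have "(\<Sum>j\<in>E. (1 - \<epsilon>) * (g j)^2 + (1 - 1/\<epsilon>) * (c j)^2) = (1 - \<epsilon>) * G + (1 - 1/\<epsilon>) * CC"
    unfolding G_def CC_def by (simp add: sum.distrib sum_distrib_left)
  finally have 1: "(\<Sum>j\<in>E. (g j + c j)^2) \<ge> (1 - \<epsilon>) * G + (1 - 1/\<epsilon>) * CC" .
  have neg: "1 - 1/\<epsilon> \<le> 0" using e e1 by (simp add: field_simps)
  have "(1 - 1/\<epsilon>) * CC \<ge> (1 - 1/\<epsilon>) * (\<epsilon>^2 * G)" unfolding CC_def G_def
    by (rule mult_left_mono_neg[OF C neg])
  also have "(1 - 1/\<epsilon>) * (\<epsilon>^2 * G) = (\<epsilon>^2 - \<epsilon>) * G" using e by (simp add: field_simps power2_eq_square)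
  finally have "(\<Sum>j\<in>E. (g j + c j)^2) \<ge> (1 - \<epsilon>) * G + (\<epsilon>^2 - \<epsilon>) * G" using 1 by linarith
  moreover have "(1 - \<epsilon>) * G + (\<epsilon>^2 - \<epsilon>) * G = (1 - \<epsilon>)^2 * G" by (simp add: algebra_simps power2_eq_square)
  ultimately show ?thesis unfolding G_def by simp
qed

lemma distortion_le_tail_rate:
  fixes L t :: real
  assumes L: "L > 0" and t: "t > 0"
  shows "min (L / max t L) (1/10) \<le> 2 * L / (t + 10 * L)"
proof (cases "t \<le> 10 * L")
  case True
  have "1/10 \<le> 2 * L / (t + 10 * L)" using True L t by (simp add: field_simps)
  thus ?thesis by simp
next
  case False
  hence tL: "max t L = t" using L by simp
  have "2 * L / (2 * t) \<le> 2 * L / (t + 10 * L)"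
    by (rule divide_left_mono) (use False L t in auto)
  hence "L / t \<le> 2 * L / (t + 10 * L)" using t by simp
  thus ?thesis unfolding tL by simp
qed

lemma rayleigh_gap_arith:
  fixes lam L eps X Y Q :: real
  assumes lam: "lam > 0" and L: "L > 0" and e: "eps > 0" "eps \<le> 1/10" and le: "lam * eps \<le> L"
    and X: "X > 0" and Y1: "(1 - eps) * X \<le> Y" and Y2: "Y \<le> (1 + eps) * X"
    and Q1: "lam * (1 - eps)^2 * X - 2/5 * L * X \<le> Q"
  shows "(lam - 51 * L) * Y < Q"
proof (rule ccontr)
  assume "\<not> (lam - 51 * L) * Y < Q"
  hence Q2: "Q \<le> (lam - 51 * L) * Y" by simp
  have "(1 - eps)^2 \<ge> 1 - 2 * eps" by (simp add: power2_eq_square algebra_simps)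
  hence "lam * X * (1 - eps)^2 \<ge> lam * X * (1 - 2 * eps)" using lam X by (intro mult_left_mono) auto
  moreover have "lam * X * (1 - 2 * eps) = lam * X - 2 * ((lam * eps) * X)" by (simp add: algebra_simps)
  moreover have "(lam * eps) * X \<le> L * X" using le X by (intro mult_right_mono) auto
  ultimately have lo: "Q \<ge> lam * X - (12/5) * (L * X)" using Q1 by (simp add: algebra_simps)
  have LX: "L * X > 0" using L X by simp
  show False
  proof (cases "lam - 51 * L \<ge> 0")
    case True
    have "(lam - 51 * L) * Y \<le> (lam - 51 * L) * ((1 + eps) * X)" by (rule mult_left_mono[OF Y2 True])
    also have "\<dots> = lam * X - 51 * (L * X) + eps * (lam - 51 * L) * X" by (simp add: algebra_simps)
    also have "eps * (lam - 51 * L) * X \<le> eps * lam * X"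
      using e X L by (intro mult_right_mono mult_left_mono) auto
    also have "eps * lam * X \<le> L * X" using le X by (simp add: mult.commute)
    finally show False using Q2 lo LX by linarith
  next
    case False
    have "(lam - 51 * L) * Y \<le> (lam - 51 * L) * ((1 - eps) * X)" using False Y1
      by (intro mult_left_mono_neg) auto
    also have "\<dots> = lam * X - 51 * (L * X) + eps * (51 * L - lam) * X" by (simp add: algebra_simps)
    also have "eps * (51 * L - lam) * X \<le> (1/10) * (51 * L) * X"
      using e X L lam False by (intro mult_right_mono mult_mono) auto
    finally show False using Q2 lo LX by (simp add: algebra_simps) 
  qed
qed

lemma polarization_arith:
  fixes a b c X p W \<delta> s :: real
  assumes d: "\<delta> > 0" and ds: "\<delta> * s = 1"
    and up: "a + 2*s*b + s^2*c \<le> (1+\<delta>)*(X + 2*s*p + s^2*W)"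
    and lo: "(1-\<delta>)*(X + 2*(-s)*p + (-s)^2*W) \<le> a + 2*(-s)*b + (-s)^2*c"
    and defect: "b - p = W"
  shows "W \<le> \<delta>^2 * X"
proof -
  have "(a + 2*s*b + s^2*c) - (a + 2*(-s)*b + (-s)^2*c) = 4*s*b" by (simp add: algebra_simps)
  moreover have "(1+\<delta>)*(X + 2*s*p + s^2*W) - (1-\<delta>)*(X + 2*(-s)*p + (-s)^2*W)
      = 4*s*p + 2*\<delta>*X + 2*(\<delta>*s)*s*W"
    by (simp add: algebra_simps power2_eq_square)
  moreover have "4*s*b = 4*s*p + 4*s*W" using defect by (simp add: algebra_simps flip: defect)
  ultimately have "4*s*W \<le> 2*\<delta>*X + 2*(\<delta>*s)*s*W" using up lo by linarith
  hence "s * W \<le> \<delta> * X" unfolding ds by (simp add: mult.commute)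
  hence "(\<delta> * s) * W \<le> \<delta> * (\<delta> * X)" using d by (simp add: mult.assoc mult_left_mono)
  thus ?thesis unfolding ds by (simp add: power2_eq_square)
qed

lemma scalar_prod_add_smult_self:
  fixes u v :: "real vec"
  assumes u: "u \<in> carrier_vec m" and v: "v \<in> carrier_vec m"
  shows "(u + s \<cdot>\<^sub>v v) \<bullet> (u + s \<cdot>\<^sub>v v) = u \<bullet> u + 2 * s * (u \<bullet> v) + s^2 * (v \<bullet> v)"
proof -
  have sv: "s \<cdot>\<^sub>v v \<in> carrier_vec m" using v by simp
  have "(u + s \<cdot>\<^sub>v v) \<bullet> (u + s \<cdot>\<^sub>v v) = u \<bullet> (u + s \<cdot>\<^sub>v v) + (s \<cdot>\<^sub>v v) \<bullet> (u + s \<cdot>\<^sub>v v)"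
    by (rule add_scalar_prod_distrib[OF u sv]) (use u sv in simp)
  also have "u \<bullet> (u + s \<cdot>\<^sub>v v) = u \<bullet> u + u \<bullet> (s \<cdot>\<^sub>v v)"
    by (rule scalar_prod_add_distrib[OF u u sv])
  also have "(s \<cdot>\<^sub>v v) \<bullet> (u + s \<cdot>\<^sub>v v) = (s \<cdot>\<^sub>v v) \<bullet> u + (s \<cdot>\<^sub>v v) \<bullet> (s \<cdot>\<^sub>v v)"
    by (rule scalar_prod_add_distrib[OF sv u sv])
  also have "u \<bullet> (s \<cdot>\<^sub>v v) = s * (u \<bullet> v)" using u v by simp
  also have "(s \<cdot>\<^sub>v v) \<bullet> u = s * (u \<bullet> v)" using u v by (simp add: comm_scalar_prod[OF v u])
  also have "(s \<cdot>\<^sub>v v) \<bullet> (s \<cdot>\<^sub>v v) = s^2 * (v \<bullet> v)" using v by (simp add: power2_eq_square)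
  finally show ?thesis by simp
qed

lemma polarization_defect_bound:
  fixes S :: "real mat"
  assumes S: "S \<in> carrier_mat k n" and x: "x \<in> carrier_vec n" and w: "w \<in> carrier_vec n"
    and d: "\<delta> > 0"
    and H: "\<And>s. (1 - \<delta>) * ((x + s \<cdot>\<^sub>v w) \<bullet> (x + s \<cdot>\<^sub>v w)) \<le> (S *\<^sub>v (x + s \<cdot>\<^sub>v w)) \<bullet> (S *\<^sub>v (x + s \<cdot>\<^sub>v w)) \<and>
       (S *\<^sub>v (x + s \<cdot>\<^sub>v w)) \<bullet> (S *\<^sub>v (x + s \<cdot>\<^sub>v w)) \<le> (1 + \<delta>) * ((x + s \<cdot>\<^sub>v w) \<bullet> (x + s \<cdot>\<^sub>v w))"
    and B: "(S *\<^sub>v x) \<bullet> (S *\<^sub>v w) - x \<bullet> w = w \<bullet> w"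
  shows "w \<bullet> w \<le> \<delta>^2 * (x \<bullet> x)"
proof -
  have Sx: "S *\<^sub>v x \<in> carrier_vec k" and Sw: "S *\<^sub>v w \<in> carrier_vec k" using S x w by auto
  have ex: "\<And>s. S *\<^sub>v (x + s \<cdot>\<^sub>v w) = S *\<^sub>v x + s \<cdot>\<^sub>v (S *\<^sub>v w)"
    using S x w by (simp add: mult_add_distrib_mat_vec mult_mat_vec)
  have q1: "\<And>s. (S *\<^sub>v (x + s \<cdot>\<^sub>v w)) \<bullet> (S *\<^sub>v (x + s \<cdot>\<^sub>v w)) = 
     (S *\<^sub>v x) \<bullet> (S *\<^sub>v x) + 2 * s * ((S *\<^sub>v x) \<bullet> (S *\<^sub>v w)) + s^2 * ((S *\<^sub>v w) \<bullet> (S *\<^sub>v w))"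
    unfolding ex by (rule scalar_prod_add_smult_self[OF Sx Sw])
  have q2: "\<And>s. (x + s \<cdot>\<^sub>v w) \<bullet> (x + s \<cdot>\<^sub>v w) = x \<bullet> x + 2 * s * (x \<bullet> w) + s^2 * (w \<bullet> w)"
    by (rule scalar_prod_add_smult_self[OF x w])
  define s where "s = 1 / \<delta>"
  have ds: "\<delta> * s = 1" unfolding s_def using d by simp
  show ?thesis
  proof (rule polarization_arith[OF d ds _ _ B])
    show "(S *\<^sub>v x) \<bullet> (S *\<^sub>v x) + 2 * s * ((S *\<^sub>v x) \<bullet> (S *\<^sub>v w)) + s^2 * ((S *\<^sub>v w) \<bullet> (S *\<^sub>v w))
       \<le> (1 + \<delta>) * (x \<bullet> x + 2 * s * (x \<bullet> w) + s^2 * (w \<bullet> w))"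
      using H[of s] unfolding q1 q2 by simp
    show "(1 - \<delta>) * (x \<bullet> x + 2 * (-s) * (x \<bullet> w) + (-s)^2 * (w \<bullet> w)) \<le>
      (S *\<^sub>v x) \<bullet> (S *\<^sub>v x) + 2 * (-s) * ((S *\<^sub>v x) \<bullet> (S *\<^sub>v w)) + (-s)^2 * ((S *\<^sub>v w) \<bullet> (S *\<^sub>v w))"
      using H[of "-s"] unfolding q1 q2 by simp
  qed
qed

text \<open>The vectors of \<open>R\<close>, padded with zero rows, form a singular \<open>n \<times> n\<close> matrix.\<close>

lemma exists_nonzero_orthogonal:
  fixes R :: "real vec set"
  assumes fin: "finite R" and Rc: "R \<subseteq> carrier_vec n" and cardR: "card R < n"
  shows "\<exists>g \<in> carrier_vec n. g \<noteq> 0\<^sub>v n \<and> (\<forall>r\<in>R. r \<bullet> g = 0)"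
proof -
  obtain rs where rs: "set rs = R" "distinct rs" using finite_distinct_list[OF fin] by blast
  have lrs: "length rs < n" using cardR rs distinct_card by metis
  define c where "c = (\<lambda>i. if i < length rs then rs ! i else 0\<^sub>v n)"
  have cc: "c \<in> {0..<n} \<rightarrow> carrier_vec n"
  proof
    fix i assume "i \<in> {0..<n}"
    show "c i \<in> carrier_vec n"
    proof (cases "i < length rs")
      case True
      hence "rs ! i \<in> R" using rs(1) nth_mem by blast
      thus ?thesis using True Rc unfolding c_def by auto
    qed (simp add: c_def)
  qed
  define C where "C = mat\<^sub>r n n (\<lambda>i. if i = n - 1 then 0\<^sub>v n else c i)"
  have C: "C \<in> carrier_mat n n" unfolding C_def by simp
  have "det C = 0" unfolding C_def by (rule det_row_0[OF _ cc]) (use lrs in simp)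
  then obtain g where g: "g \<in> carrier_vec n" "g \<noteq> 0\<^sub>v n" "C *\<^sub>v g = 0\<^sub>v n"
    using det_0_iff_vec_prod_zero[OF C] by blast
  have "\<forall>r\<in>R. r \<bullet> g = 0"
  proof
    fix r assume "r \<in> R"
    then obtain i where i: "i < length rs" "r = rs ! i" using rs by (metis in_set_conv_nth)
    have ci: "c i = r" unfolding c_def using i by simp
    have "(C *\<^sub>v g) $ i = row C i \<bullet> g" using i lrs C by simp
    also have "row C i = r"
    proof -
      have ni: "i \<noteq> n - 1" "i < n" using i lrs by auto
      have "row C i = (if i = n - 1 then 0\<^sub>v n else c i)" unfolding C_def
      proof (rule row_mat_of_row_fun)
        have "c i \<in> carrier_vec n" using cc ni by auto
        thus "dim_vec (if i = n - 1 then 0\<^sub>v n else c i) = n" by auto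
      qed (use ni in auto)
      thus ?thesis using ni ci by simp
    qed
    finally show "r \<bullet> g = 0" using g(3) i lrs by simp
  qed
  thus ?thesis using g by blast
qed

lemma exists_nonzero_orthogonal_supported:
  fixes W :: "real vec set" and E :: "nat set"
  assumes fin: "finite W" and Wc: "W \<subseteq> carrier_vec n" and En: "E \<subseteq> {..<n}"
    and card: "card W < card E"
  shows "\<exists>g \<in> carrier_vec n. g \<noteq> 0\<^sub>v n \<and> (\<forall>j<n. j \<notin> E \<longrightarrow> g $ j = 0) \<and> (\<forall>w\<in>W. w \<bullet> g = 0)"
proof -
  define R where "R = W \<union> (\<lambda>j. unit_vec n j) ` ({..<n} - E)"
  have finE: "finite E" using En finite_subset by blast
  have "card R \<le> card W + card ({..<n} - E)"
    unfolding R_def by (metis card_Un_le card_image_le finite_Diff finite_lessThan add_left_mono order_trans)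
  also have "card ({..<n} - E) = n - card E" using card_Diff_subset[OF finE En] by simp
  finally have "card R < n" using card card_mono[OF _ En] by simp
  moreover have "finite R" "R \<subseteq> carrier_vec n" unfolding R_def using fin Wc by auto
  ultimately obtain g where g: "g \<in> carrier_vec n" "g \<noteq> 0\<^sub>v n" and gR: "\<forall>r\<in>R. r \<bullet> g = 0"
    using exists_nonzero_orthogonal by blast
  have "g $ j = 0" if "j < n" "j \<notin> E" for j
    using gR[rule_format, of "unit_vec n j"] that g unfolding R_def by simp
  thus ?thesis using g gR unfolding R_def by blast
qed

section \<open>Sketching a spectral decomposition under Assumption L\<close>

locale eigen_sketch =
  fixes A S U :: "real mat" and es :: "real list" and n k :: nat and L :: real
  assumes U_carrier: "U \<in> carrier_mat n n" and U_orthogonal: "U\<^sup>T * U = 1\<^sub>m n"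
    and A_spectral: "A = U * mat_diag n ((!) es) * U\<^sup>T"
    and S_carrier: "S \<in> carrier_mat k n"
    and L_pos: "0 < L"
    and eigenvalue_gap: "\<And>j. j < n \<Longrightarrow> es ! j \<noteq> 0 \<Longrightarrow> L \<le> \<bar>es ! j\<bar>"
    and sketch_assumption_L: "assumption_L S A L"
begin

lemma A_carrier: "A \<in> carrier_mat n n"
  unfolding A_spectral using U_carrier by (meson mat_diag_dim mult_carrier_mat transpose_carrier_mat)

lemma mult_vec_in_eig_span:
  assumes h: "h \<in> carrier_vec n" and supp: "\<And>j. j < n \<Longrightarrow> h $ j \<noteq> 0 \<Longrightarrow> t \<le> \<bar>es ! j\<bar>"
  shows "U *\<^sub>v h \<in> eig_span A t"
proof (cases "\<exists>j0<n. t \<le> \<bar>es ! j0\<bar>")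
  case False
  hence "h = 0\<^sub>v n" using supp h by (intro eq_vecI) auto
  hence "U *\<^sub>v h = 0\<^sub>v n" using U_carrier by (intro eq_vecI) auto
  thus ?thesis unfolding eig_span_def using A_carrier
    by (auto simp: finsum_vec_empty intro!: exI[of _ 0])
next
  case True
  then obtain j0 where j0: "j0 < n" "t \<le> \<bar>es ! j0\<bar>" by blast
  \<comment> \<open>every listed vector must be an admissible eigenvector, so indices outside the
    support are padded with \<open>col U j0\<close> and coefficient \<open>0\<close>\<close>
  define c where "c = (\<lambda>j. if t \<le> \<bar>es ! j\<bar> then h $ j else 0)"
  define v where "v = (\<lambda>j. if t \<le> \<bar>es ! j\<bar> then col U j else col U j0)"
  define mu where "mu = (\<lambda>j. if t \<le> \<bar>es ! j\<bar> then es ! j else es ! j0)"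
  have cl: "(\<lambda>j. c j \<cdot>\<^sub>v v j) \<in> {..<n} \<rightarrow> carrier_vec n" unfolding v_def using U_carrier by auto
  have "U *\<^sub>v h = finsum_vec TYPE(real) (dim_row A) (\<lambda>j. c j \<cdot>\<^sub>v v j) {..<n}"
  proof (rule eq_vecI)
    fix r assume "r < dim_vec (finsum_vec TYPE(real) (dim_row A) (\<lambda>j. c j \<cdot>\<^sub>v v j) {..<n})"
    hence r: "r < n" using finsum_vec_closed[OF cl] A_carrier by simp
    have "finsum_vec TYPE(real) (dim_row A) (\<lambda>j. c j \<cdot>\<^sub>v v j) {..<n} $ r = (\<Sum>j<n. (c j \<cdot>\<^sub>v v j) $ r)"
      using index_finsum_vec[OF _ r cl] A_carrier by simp
    also have "\<dots> = (\<Sum>j<n. U $$ (r,j) * h $ j)"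
      using supp r U_carrier by (intro sum.cong) (auto simp: c_def v_def)
    also have "\<dots> = (U *\<^sub>v h) $ r"
      using r U_carrier h by (simp add: scalar_prod_def lessThan_atLeast0 row_def)
    finally show "(U *\<^sub>v h) $ r = finsum_vec TYPE(real) (dim_row A) (\<lambda>j. c j \<cdot>\<^sub>v v j) {..<n} $ r" ..
  qed (use finsum_vec_closed[OF cl] A_carrier U_carrier in simp)
  moreover have "\<forall>j<n. eigenvector A (v j) (mu j) \<and> t \<le> \<bar>mu j\<bar>"
    unfolding v_def mu_def
    using eigenvector_col_spectral[OF U_carrier U_orthogonal A_spectral] j0 by auto
  ultimately show ?thesis unfolding eig_span_def by blast
qed

lemma sketch_embedding:
  assumes t: "L \<le> t" and h: "h \<in> carrier_vec n"
    and supp: "\<And>j. j < n \<Longrightarrow> h $ j \<noteq> 0 \<Longrightarrow> t \<le> \<bar>es ! j\<bar>"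
  shows "(1 - min (L/t) (1/10)) * (h \<bullet> h) \<le> (S *\<^sub>v (U *\<^sub>v h)) \<bullet> (S *\<^sub>v (U *\<^sub>v h))"
    and "(S *\<^sub>v (U *\<^sub>v h)) \<bullet> (S *\<^sub>v (U *\<^sub>v h)) \<le> (1 + min (L/t) (1/10)) * (h \<bullet> h)"
proof -
  have "subspace_embedding S (min (L/t) (1/10)) (eig_span A t)"
    using sketch_assumption_L t unfolding assumption_L_def by blast
  with mult_vec_in_eig_span[OF h supp]
  have "(1 - min (L/t) (1/10)) * ((U *\<^sub>v h) \<bullet> (U *\<^sub>v h)) \<le> (S *\<^sub>v (U *\<^sub>v h)) \<bullet> (S *\<^sub>v (U *\<^sub>v h)) \<and>
    (S *\<^sub>v (U *\<^sub>v h)) \<bullet> (S *\<^sub>v (U *\<^sub>v h)) \<le> (1 + min (L/t) (1/10)) * ((U *\<^sub>v h) \<bullet> (U *\<^sub>v h))"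
    unfolding subspace_embedding_def by blast
  thus "(1 - min (L/t) (1/10)) * (h \<bullet> h) \<le> (S *\<^sub>v (U *\<^sub>v h)) \<bullet> (S *\<^sub>v (U *\<^sub>v h))"
    and "(S *\<^sub>v (U *\<^sub>v h)) \<bullet> (S *\<^sub>v (U *\<^sub>v h)) \<le> (1 + min (L/t) (1/10)) * (h \<bullet> h)"
    unfolding orthogonal_mat_preserves_norm[OF U_carrier U_orthogonal h] by auto
qed

text \<open>\<open>sketch_coord g\<close> is the coordinate vector of \<open>U\<^sup>T S\<^sup>T S U g\<close> in the eigenbasis of \<open>A\<close>;
  without sketching it would be \<open>g\<close> itself.\<close>

definition sketch_coord :: "real vec \<Rightarrow> nat \<Rightarrow> real" where
  "sketch_coord g j = (S *\<^sub>v col U j) \<bullet> (S *\<^sub>v (U *\<^sub>v g))"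

lemma scalar_prod_sketch:
  assumes g: "g \<in> carrier_vec n" and h: "h \<in> carrier_vec n"
  shows "(S *\<^sub>v (U *\<^sub>v g)) \<bullet> (S *\<^sub>v (U *\<^sub>v h)) = (\<Sum>j<n. h $ j * sketch_coord g j)"
proof -
  have SU: "S * U \<in> carrier_mat k n" using S_carrier U_carrier by simp
  have "S *\<^sub>v (U *\<^sub>v h) = (S * U) *\<^sub>v h"
    using S_carrier U_carrier h by (simp add: assoc_mult_mat_vec[of _ k n _ n])
  moreover have "S *\<^sub>v (U *\<^sub>v g) \<in> carrier_vec k" using S_carrier U_carrier g by simp
  ultimately show ?thesis
    using scalar_prod_mult_mat_vec_cols[OF SU _ h] col_mult2[OF S_carrier U_carrier]
    unfolding sketch_coord_def by simp
qed

text \<open>The defects \<open>sketch_coord g j - g $ j\<close> on a set \<open>J\<close> are the coordinates of a vector \<open>w\<close>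
  with \<open>\<langle>S U g, S U w\<rangle> - \<langle>g, w\<rangle> = \<parallel>w\<parallel>\<^sup>2\<close>; polarizing the embedding on the span of \<open>g\<close>
  and \<open>w\<close> bounds this by the distortion.\<close>

lemma sketch_coord_defect_le:
  assumes t: "L \<le> t" and g: "g \<in> carrier_vec n" and J: "J \<subseteq> {..<n}"
    and supp: "\<And>j. j < n \<Longrightarrow> g $ j \<noteq> 0 \<or> j \<in> J \<Longrightarrow> t \<le> \<bar>es ! j\<bar>"
  shows "(\<Sum>j\<in>J. (sketch_coord g j - g $ j)\<^sup>2) \<le> (min (L/t) (1/10))\<^sup>2 * (g \<bullet> g)"
proof -
  define \<delta> where "\<delta> = min (L/t) (1/10)"
  have \<delta>: "\<delta> > 0" unfolding \<delta>_def using L_pos t by simp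
  define d where "d j = sketch_coord g j - g $ j" for j
  define w where "w = vec n (\<lambda>j. if j \<in> J then d j else 0)"
  have w: "w \<in> carrier_vec n" unfolding w_def by simp
  have SU: "S * U \<in> carrier_mat k n" using S_carrier U_carrier by simp
  have SU_vec: "(S * U) *\<^sub>v v = S *\<^sub>v (U *\<^sub>v v)" if "v \<in> carrier_vec n" for v
    using S_carrier U_carrier that by (simp add: assoc_mult_mat_vec[of _ k n _ n])
  have restrict: "(\<Sum>j<n. if j \<in> J then (d j)\<^sup>2 else 0) = (\<Sum>j\<in>J. (d j)\<^sup>2)"
    using J by (simp add: sum.inter_restrict[symmetric] Int_absorb1)
  have ww: "w \<bullet> w = (\<Sum>j\<in>J. (d j)\<^sup>2)"
    unfolding restrict[symmetric] w_def
    by (auto simp: scalar_prod_def lessThan_atLeast0 power2_eq_square intro!: sum.cong)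
  have "((S * U) *\<^sub>v g) \<bullet> ((S * U) *\<^sub>v w) - g \<bullet> w = (\<Sum>j<n. w $ j * d j)"
    unfolding SU_vec[OF g] SU_vec[OF w] scalar_prod_sketch[OF g w] d_def
    using g w by (simp add: scalar_prod_def lessThan_atLeast0 sum_subtractf[symmetric] algebra_simps)
  also have "\<dots> = (\<Sum>j<n. if j \<in> J then (d j)\<^sup>2 else 0)"
    unfolding w_def by (auto simp: power2_eq_square intro!: sum.cong)
  also have "\<dots> = w \<bullet> w" unfolding restrict ww ..
  finally have defect: "((S * U) *\<^sub>v g) \<bullet> ((S * U) *\<^sub>v w) - g \<bullet> w = w \<bullet> w" .
  have "w \<bullet> w \<le> \<delta>\<^sup>2 * (g \<bullet> g)"
  proof (rule polarization_defect_bound[OF SU g w \<delta> _ defect])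
    fix s :: real
    have gs: "g + s \<cdot>\<^sub>v w \<in> carrier_vec n" using g w by simp
    have "t \<le> \<bar>es ! j\<bar>" if "j < n" "(g + s \<cdot>\<^sub>v w) $ j \<noteq> 0" for j
      using supp[of j] that g w unfolding w_def by (auto split: if_splits)
    from sketch_embedding[OF t gs this]
    show "(1 - \<delta>) * ((g + s \<cdot>\<^sub>v w) \<bullet> (g + s \<cdot>\<^sub>v w)) \<le> ((S * U) *\<^sub>v (g + s \<cdot>\<^sub>v w)) \<bullet> ((S * U) *\<^sub>v (g + s \<cdot>\<^sub>v w)) \<and>
      ((S * U) *\<^sub>v (g + s \<cdot>\<^sub>v w)) \<bullet> ((S * U) *\<^sub>v (g + s \<cdot>\<^sub>v w)) \<le> (1 + \<delta>) * ((g + s \<cdot>\<^sub>v w) \<bullet> (g + s \<cdot>\<^sub>v w))"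
      unfolding SU_vec[OF gs] \<delta>_def by blast
  qed
  thus ?thesis unfolding ww \<delta>_def d_def .
qed

lemma sketch_coord_mass_ge:
  assumes lam: "L \<le> t" and g: "g \<in> carrier_vec n"
    and supp: "\<And>j. j < n \<Longrightarrow> g $ j \<noteq> 0 \<Longrightarrow> t \<le> \<bar>es ! j\<bar>"
  shows "(1 - min (L/t) (1/10))\<^sup>2 * (g \<bullet> g) \<le> (\<Sum>j\<in>{j. j < n \<and> t \<le> \<bar>es ! j\<bar>}. (sketch_coord g j)\<^sup>2)"
proof -
  define E where "E = {j. j < n \<and> t \<le> \<bar>es ! j\<bar>}"
  define \<epsilon> where "\<epsilon> = min (L/t) (1/10)"
  have \<epsilon>: "0 < \<epsilon>" "\<epsilon> \<le> 1" unfolding \<epsilon>_def using L_pos lam by auto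
  have gg: "g \<bullet> g = (\<Sum>j\<in>E. (g $ j)\<^sup>2)"
  proof -
    have "g \<bullet> g = (\<Sum>j\<in>{0..<n}. (g $ j)\<^sup>2)" using g by (simp add: scalar_prod_def power2_eq_square)
    also have "\<dots> = (\<Sum>j\<in>E. (g $ j)\<^sup>2)"
      by (rule sum.mono_neutral_right) (use supp in \<open>auto simp: E_def\<close>)
    finally show ?thesis .
  qed
  have "(\<Sum>j\<in>E. (sketch_coord g j - g $ j)\<^sup>2) \<le> \<epsilon>\<^sup>2 * (\<Sum>j\<in>E. (g $ j)\<^sup>2)"
    using sketch_coord_defect_le[OF lam g, of E] supp unfolding E_def \<epsilon>_def gg by auto
  from sum_sq_add_ge_of_perturbation[OF \<epsilon> this]
  show ?thesis unfolding E_def[symmetric] \<epsilon>_def[symmetric] gg by simp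
qed

lemma sketch_coord_tail_le:
  assumes t: "L \<le> t" and g: "g \<in> carrier_vec n"
    and supp: "\<And>j. j < n \<Longrightarrow> g $ j \<noteq> 0 \<Longrightarrow> t \<le> \<bar>es ! j\<bar>"
  shows "(\<Sum>j\<in>{j. j < n \<and> 0 < \<bar>es ! j\<bar> \<and> \<bar>es ! j\<bar> < t}. \<bar>es ! j\<bar> * (sketch_coord g j)\<^sup>2)
    \<le> 2/5 * L * (g \<bullet> g)"
proof -
  define Small where "Small = {j. j < n \<and> 0 < \<bar>es ! j\<bar> \<and> \<bar>es ! j\<bar> < t}"
  define K where "K = 4 * L\<^sup>2 * (g \<bullet> g)"
  have gg: "0 \<le> g \<bullet> g" using conjugate_square_ge_0_vec[of g] by simp
  hence K: "0 \<le> K" unfolding K_def by simp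
  have tail: "(\<Sum>j\<in>{j\<in>Small. s \<le> \<bar>es ! j\<bar>}. (sketch_coord g j)\<^sup>2) \<le> K / (s + 10 * L)\<^sup>2"
    if s: "s > 0" for s
  proof (cases "{j\<in>Small. s \<le> \<bar>es ! j\<bar>} = {}")
    case True thus ?thesis unfolding True using K by simp
  next
    case False
    define J where "J = {j\<in>Small. s \<le> \<bar>es ! j\<bar>}"
    define t' where "t' = max s L"
    obtain j1 where "j1 \<in> J" using False unfolding J_def by blast
    \<comment> \<open>Assumption L at level \<open>t' < t\<close> covers both \<open>g\<close> and the vectors supported on \<open>J\<close>\<close>
    hence t't: "t' < t" using eigenvalue_gap[of j1] unfolding J_def Small_def t'_def by auto
    have J: "J \<subseteq> {..<n}" unfolding J_def Small_def by auto
    have "(\<Sum>j\<in>J. (sketch_coord g j)\<^sup>2) = (\<Sum>j\<in>J. (sketch_coord g j - g $ j)\<^sup>2)"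
      using supp unfolding J_def Small_def by (intro sum.cong) force+
    also have "\<dots> \<le> (min (L/t') (1/10))\<^sup>2 * (g \<bullet> g)"
    proof (rule sketch_coord_defect_le[OF _ g J])
      show "L \<le> t'" unfolding t'_def by simp
      fix j assume "j < n" "g $ j \<noteq> 0 \<or> j \<in> J"
      thus "t' \<le> \<bar>es ! j\<bar>"
        using supp[of j] t't eigenvalue_gap[of j] unfolding J_def Small_def t'_def by auto
    qed
    also have "\<dots> \<le> (2 * L / (s + 10 * L))\<^sup>2 * (g \<bullet> g)"
      using distortion_le_tail_rate[OF L_pos s] L_pos gg
      by (intro mult_right_mono power_mono) (auto simp: t'_def)
    also have "\<dots> = K / (s + 10 * L)\<^sup>2" unfolding K_def by (simp add: power_divide power_mult_distrib)
    finally show ?thesis unfolding J_def .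
  qed
  have "(\<Sum>j\<in>Small. \<bar>es ! j\<bar> * (sketch_coord g j)\<^sup>2) \<le> K / (10 * L)"
    by (rule first_moment_le_of_tail_bound[where a = "\<lambda>j. \<bar>es ! j\<bar>" and p = "\<lambda>j. (sketch_coord g j)\<^sup>2"])
      (use L_pos K tail in \<open>auto simp: Small_def\<close>)
  also have "K / (10 * L) = 2/5 * L * (g \<bullet> g)" unfolding K_def using L_pos by (simp add: power2_eq_square)
  finally show ?thesis unfolding Small_def .
qed

lemma sketch_quadratic_form:
  assumes y: "y \<in> carrier_vec k"
  shows "y \<bullet> ((S * A * S\<^sup>T) *\<^sub>v y) = (\<Sum>j<n. es ! j * ((S *\<^sub>v col U j) \<bullet> y)\<^sup>2)"
proof -
  define z where "z = S\<^sup>T *\<^sub>v y"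
  have z: "z \<in> carrier_vec n" unfolding z_def using S_carrier y by simp
  have Az: "A *\<^sub>v z \<in> carrier_vec n" using A_carrier z by simp
  have SA: "S * A \<in> carrier_mat k n" using S_carrier A_carrier by simp
  have "(S * A * S\<^sup>T) *\<^sub>v y = (S * A) *\<^sub>v z"
    unfolding z_def by (rule assoc_mult_mat_vec[OF SA _ y]) (use S_carrier in simp)
  also have "\<dots> = S *\<^sub>v (A *\<^sub>v z)" by (rule assoc_mult_mat_vec[OF S_carrier A_carrier z])
  finally have "(S * A * S\<^sup>T) *\<^sub>v y = S *\<^sub>v (A *\<^sub>v z)" .
  hence "y \<bullet> ((S * A * S\<^sup>T) *\<^sub>v y) = z \<bullet> (A *\<^sub>v z)"
    using transpose_vec_mult_scalar[OF S_carrier Az y] unfolding z_def by simp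
  also have "\<dots> = (\<Sum>j<n. es ! j * (col U j \<bullet> z)\<^sup>2)"
    by (rule quadratic_form_spectral[OF U_carrier A_spectral z])
  also have "\<dots> = (\<Sum>j<n. es ! j * ((S *\<^sub>v col U j) \<bullet> y)\<^sup>2)"
  proof (rule sum.cong[OF refl])
    fix j assume "j \<in> {..<n}"
    hence uj: "col U j \<in> carrier_vec n" using U_carrier by simp
    have "col U j \<bullet> z = (S *\<^sub>v col U j) \<bullet> y"
      using transpose_vec_mult_scalar[OF S_carrier uj y] comm_scalar_prod[OF uj z]
        comm_scalar_prod[OF y mult_mat_vec_carrier[OF S_carrier uj]]
      unfolding z_def by simp
    thus "es ! j * (col U j \<bullet> z)\<^sup>2 = es ! j * ((S *\<^sub>v col U j) \<bullet> y)\<^sup>2" by simp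
  qed
  finally show ?thesis .
qed

lemma sketch_quadratic_form_ge:
  assumes t: "L \<le> t" and g: "g \<in> carrier_vec n"
    and supp: "\<And>j. j < n \<Longrightarrow> g $ j \<noteq> 0 \<Longrightarrow> t \<le> \<bar>es ! j\<bar>"
    and neg: "\<And>j. j < n \<Longrightarrow> es ! j \<le> -t \<Longrightarrow> sketch_coord g j = 0"
  defines "y \<equiv> S *\<^sub>v (U *\<^sub>v g)"
  shows "t * (1 - min (L/t) (1/10))\<^sup>2 * (g \<bullet> g) - 2/5 * L * (g \<bullet> g) \<le> y \<bullet> ((S * A * S\<^sup>T) *\<^sub>v y)"
proof -
  define \<rho> where "\<rho> = sketch_coord g"
  define E where "E = {j. j < n \<and> t \<le> \<bar>es ! j\<bar>}"
  define Small where "Small = {j. j < n \<and> 0 < \<bar>es ! j\<bar> \<and> \<bar>es ! j\<bar> < t}"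
  have y: "y \<in> carrier_vec k" unfolding y_def using S_carrier U_carrier g by simp
  have "y \<bullet> ((S * A * S\<^sup>T) *\<^sub>v y) = (\<Sum>j<n. es ! j * (\<rho> j)\<^sup>2)"
    unfolding sketch_quadratic_form[OF y] unfolding \<rho>_def sketch_coord_def y_def ..
  also have "\<dots> \<ge> (\<Sum>j<n. (if j \<in> E then t * (\<rho> j)\<^sup>2 else 0) - (if j \<in> Small then \<bar>es ! j\<bar> * (\<rho> j)\<^sup>2 else 0))"
  proof (rule sum_mono)
    fix j assume j: "j \<in> {..<n}"
    show "(if j \<in> E then t * (\<rho> j)\<^sup>2 else 0) - (if j \<in> Small then \<bar>es ! j\<bar> * (\<rho> j)\<^sup>2 else 0)
      \<le> es ! j * (\<rho> j)\<^sup>2"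
    proof (cases "es ! j \<le> -t")
      case True thus ?thesis using neg[of j] j t L_pos by (simp add: \<rho>_def Small_def)
    next
      case False
      thus ?thesis using j t L_pos mult_right_mono[of t "es ! j" "(\<rho> j)\<^sup>2"]
          mult_right_mono[of "- \<bar>es ! j\<bar>" "es ! j" "(\<rho> j)\<^sup>2"]
        by (auto simp: E_def Small_def)
    qed
  qed
  also have "(\<Sum>j<n. (if j \<in> E then t * (\<rho> j)\<^sup>2 else 0) - (if j \<in> Small then \<bar>es ! j\<bar> * (\<rho> j)\<^sup>2 else 0))
      = t * (\<Sum>j\<in>E. (\<rho> j)\<^sup>2) - (\<Sum>j\<in>Small. \<bar>es ! j\<bar> * (\<rho> j)\<^sup>2)"
  proof -
    have "E \<subseteq> {..<n}" "Small \<subseteq> {..<n}" unfolding E_def Small_def by auto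
    thus ?thesis by (simp add: sum_subtractf sum.inter_restrict[symmetric] Int_absorb1 sum_distrib_left)
  qed
  finally have "t * (\<Sum>j\<in>E. (\<rho> j)\<^sup>2) - (\<Sum>j\<in>Small. \<bar>es ! j\<bar> * (\<rho> j)\<^sup>2) \<le> y \<bullet> ((S * A * S\<^sup>T) *\<^sub>v y)" .
  moreover have "t * ((1 - min (L/t) (1/10))\<^sup>2 * (g \<bullet> g)) \<le> t * (\<Sum>j\<in>E. (\<rho> j)\<^sup>2)"
    using sketch_coord_mass_ge[OF t g supp] t L_pos unfolding E_def \<rho>_def by (intro mult_left_mono) auto
  moreover have "(\<Sum>j\<in>Small. \<bar>es ! j\<bar> * (\<rho> j)\<^sup>2) \<le> 2/5 * L * (g \<bullet> g)"
    using sketch_coord_tail_le[OF t g supp] unfolding Small_def \<rho>_def .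
  ultimately show ?thesis by (simp add: mult.assoc)
qed

lemma pullback_scalar_prod:
  assumes "w \<in> carrier_vec k" and "g \<in> carrier_vec n"
  shows "(U\<^sup>T *\<^sub>v (S\<^sup>T *\<^sub>v w)) \<bullet> g = w \<bullet> (S *\<^sub>v (U *\<^sub>v g))"
proof -
  have "S\<^sup>T *\<^sub>v w \<in> carrier_vec n" using S_carrier assms by simp
  thus ?thesis
    using transpose_vec_mult_scalar[OF U_carrier assms(2)] transpose_vec_mult_scalar[OF S_carrier _ assms(1)]
      U_carrier assms by simp
qed

text \<open>A dimension count: the conditions are one linear equation per eigenvalue \<open>\<le> -t\<close> and per
  element of \<open>G\<close>, fewer than the number of eigenvalues with \<open>\<bar>\<lambda>\<^sub>j\<bar> \<ge> t\<close>.\<close>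

lemma exists_test_vector:
  assumes V: "V \<in> carrier_mat k k" and G: "G \<subseteq> {..<k}" and t: "0 < t"
    and card: "card G < card {j. j < n \<and> t \<le> es ! j}"
  obtains g where "g \<in> carrier_vec n" "g \<noteq> 0\<^sub>v n"
    "\<And>j. j < n \<Longrightarrow> g $ j \<noteq> 0 \<Longrightarrow> t \<le> \<bar>es ! j\<bar>"
    "\<And>j. j < n \<Longrightarrow> es ! j \<le> -t \<Longrightarrow> sketch_coord g j = 0"
    "\<And>l. l \<in> G \<Longrightarrow> col V l \<bullet> (S *\<^sub>v (U *\<^sub>v g)) = 0"
proof -
  define Pos where "Pos = {j. j < n \<and> t \<le> es ! j}"
  define Neg where "Neg = {j. j < n \<and> es ! j \<le> -t}"
  define E where "E = {j. j < n \<and> t \<le> \<bar>es ! j\<bar>}"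
  define W where "W = (\<lambda>w. U\<^sup>T *\<^sub>v (S\<^sup>T *\<^sub>v w)) ` ((\<lambda>j. S *\<^sub>v col U j) ` Neg \<union> col V ` G)"
  have finG: "finite G" using G finite_subset by blast
  have finNeg: "finite Neg" unfolding Neg_def by simp
  have "card W \<le> card ((\<lambda>j. S *\<^sub>v col U j) ` Neg \<union> col V ` G)"
    unfolding W_def using finNeg finG by (intro card_image_le) auto
  also have "\<dots> \<le> card ((\<lambda>j. S *\<^sub>v col U j) ` Neg) + card (col V ` G)" by (rule card_Un_le)
  also have "\<dots> \<le> card Neg + card G" using finNeg finG by (intro add_mono card_image_le)
  also have "\<dots> < card Neg + card Pos" using card unfolding Pos_def by simp
  also have "\<dots> = card E"
  proof -
    have "E = Pos \<union> Neg" "Pos \<inter> Neg = {}" unfolding E_def Pos_def Neg_def using t by auto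
    thus ?thesis by (simp add: card_Un_disjoint Pos_def Neg_def)
  qed
  finally have "card W < card E" .
  moreover have "finite W" "W \<subseteq> carrier_vec n" unfolding W_def Neg_def using finG U_carrier
    by (auto intro!: carrier_vecI)
  moreover have "E \<subseteq> {..<n}" unfolding E_def by auto
  ultimately obtain g where g: "g \<in> carrier_vec n" "g \<noteq> 0\<^sub>v n"
    and supp: "\<forall>j<n. j \<notin> E \<longrightarrow> g $ j = 0" and orth: "\<forall>w\<in>W. w \<bullet> g = 0"
    using exists_nonzero_orthogonal_supported by blast
  show ?thesis
  proof (rule that[OF g])
    show "t \<le> \<bar>es ! j\<bar>" if "j < n" "g $ j \<noteq> 0" for j using supp that unfolding E_def by auto
    show "sketch_coord g j = 0" if "j < n" "es ! j \<le> -t" for j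
      using orth pullback_scalar_prod[OF _ g(1), of "S *\<^sub>v col U j"] that S_carrier U_carrier
      unfolding W_def Neg_def sketch_coord_def by auto
    show "col V l \<bullet> (S *\<^sub>v (U *\<^sub>v g)) = 0" if "l \<in> G" for l
      using orth pullback_scalar_prod[OF _ g(1), of "col V l"] that G V unfolding W_def by auto
  qed
qed

text \<open>If fewer than \<open>i\<close> eigenvalues of \<open>S A S\<^sup>T\<close> were \<open>\<ge> t - 51 L\<close>, the test vector would
  make the Rayleigh quotient of \<open>S A S\<^sup>T\<close> at \<open>S U g\<close> both \<open>< t - 51 L\<close> and, by the
  sketch bounds, at least \<open>t - 51 L\<close>.\<close>

lemma card_sketched_eigenvalues_ge:
  assumes V: "V \<in> carrier_mat k k" and VV: "V * V\<^sup>T = 1\<^sub>m k"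
    and MD: "S * A * S\<^sup>T = V * mat_diag k ((!) nus) * V\<^sup>T"
    and t: "L \<le> t" and i: "i \<le> card {j. j < n \<and> t \<le> es ! j}"
  shows "i \<le> card {l. l < k \<and> t - 51 * L \<le> nus ! l}"
proof (rule ccontr)
  define G where "G = {l. l < k \<and> t - 51 * L \<le> nus ! l}"
  define \<epsilon> where "\<epsilon> = min (L/t) (1/10)"
  assume "\<not> i \<le> card {l. l < k \<and> t - 51 * L \<le> nus ! l}"
  hence card: "card G < card {j. j < n \<and> t \<le> es ! j}" using i unfolding G_def by simp
  have Gk: "G \<subseteq> {..<k}" and t0: "0 < t" using L_pos t unfolding G_def by auto
  obtain g where g: "g \<in> carrier_vec n" "g \<noteq> 0\<^sub>v n"
    and supp: "\<And>j. j < n \<Longrightarrow> g $ j \<noteq> 0 \<Longrightarrow> t \<le> \<bar>es ! j\<bar>"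
    and neg: "\<And>j. j < n \<Longrightarrow> es ! j \<le> -t \<Longrightarrow> sketch_coord g j = 0"
    and orth: "\<And>l. l \<in> G \<Longrightarrow> col V l \<bullet> (S *\<^sub>v (U *\<^sub>v g)) = 0"
    by (rule exists_test_vector[OF V Gk t0 card]) blast
  define y where "y = S *\<^sub>v (U *\<^sub>v g)"
  have y: "y \<in> carrier_vec k" unfolding y_def using S_carrier U_carrier g by simp
  have "y \<bullet> ((S * A * S\<^sup>T) *\<^sub>v y) \<le> (t - 51 * L) * (y \<bullet> y)"
    by (rule quadratic_form_le_if_orthogonal_to_top[OF V VV MD y])
      (use orth in \<open>auto simp: G_def y_def\<close>)
  moreover have "(t - 51 * L) * (y \<bullet> y) < y \<bullet> ((S * A * S\<^sup>T) *\<^sub>v y)"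
  proof (rule rayleigh_gap_arith)
    show "0 < t" "0 < \<epsilon>" using L_pos t unfolding \<epsilon>_def by auto
    show "\<epsilon> \<le> 1/10" unfolding \<epsilon>_def by (rule min.cobounded2)
    show "t * \<epsilon> \<le> L" using L_pos t unfolding \<epsilon>_def by (simp add: min_def field_simps)
    show "0 < g \<bullet> g" using conjugate_square_greater_0_vec[OF g(1)] g(2) by simp
    show "(1 - \<epsilon>) * (g \<bullet> g) \<le> y \<bullet> y" "y \<bullet> y \<le> (1 + \<epsilon>) * (g \<bullet> g)"
      using sketch_embedding[OF t g(1) supp] unfolding \<epsilon>_def y_def by auto
    show "t * (1 - \<epsilon>)\<^sup>2 * (g \<bullet> g) - 2/5 * L * (g \<bullet> g) \<le> y \<bullet> ((S * A * S\<^sup>T) *\<^sub>v y)"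
      using sketch_quadratic_form_ge[OF t g(1) supp neg] unfolding \<epsilon>_def y_def .
  qed (rule L_pos)
  ultimately show False by simp
qed

end

theorem mainTheorem14:
  fixes A S :: "real mat" and n k i :: nat and L :: real
  assumes "A \<in> carrier_mat n n" and "A\<^sup>T = A"
    and "L > 0"
    and "\<And>\<mu>. eigenvalue A \<mu> \<Longrightarrow> \<mu> \<noteq> 0 \<Longrightarrow> \<bar>\<mu>\<bar> \<ge> L"
    and "S \<in> carrier_mat k n"
    and "assumption_L S A L"
    and "1 \<le> i" and "i \<le> num_eigvals A" and "lam A i > 0"
  shows "i \<le> num_eigvals (S * A * S\<^sup>T) \<and> lam (S * A * S\<^sup>T) i \<ge> lam A i - 51 * L"
proof -
  obtain U es where U: "U \<in> carrier_mat n n" "U\<^sup>T * U = 1\<^sub>m n" and les: "length es = n"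
    and AD: "A = U * mat_diag n ((!) es) * U\<^sup>T" and mA: "mset es = proots (char_poly A)"
    using real_symmetric_spectral_decomposition[OF assms(1,2)] by blast
  have lamA: "lam A i = rev (sort es) ! (i - 1)" and "i \<le> length es"
    using eigvals_from_spectrum[OF mA] assms(8) by auto
  hence cntA: "i \<le> card {j. j < n \<and> lam A i \<le> es ! j}"
    using card_ge_nth_rev_sort[OF assms(7), of es] les by simp
  have gap: "L \<le> \<bar>es ! j\<bar>" if "j < n" "es ! j \<noteq> 0" for j
    using assms(4) eigenvector_col_spectral[OF U AD that(1)] that(2) unfolding eigenvalue_def by blast
  have "lam A i \<in> set (rev (sort es))" unfolding lamA using \<open>i \<le> length es\<close> assms(7)
    by (intro nth_mem) simp
  hence "lam A i \<in> set es" by simp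
  hence lamL: "L \<le> lam A i" using gap assms(9) les by (metis abs_of_pos in_set_conv_nth less_irrefl)
  have "S * A * S\<^sup>T \<in> carrier_mat k k" and "(S * A * S\<^sup>T)\<^sup>T = S * A * S\<^sup>T"
    using assms(1,5) transpose_conj_symmetric[OF assms(1,2), of "S\<^sup>T" k] by auto
  then obtain V nus where V: "V \<in> carrier_mat k k" "V * V\<^sup>T = 1\<^sub>m k" and lnus: "length nus = k"
    and MD: "S * A * S\<^sup>T = V * mat_diag k ((!) nus) * V\<^sup>T" and mM: "mset nus = proots (char_poly (S * A * S\<^sup>T))"
    using real_symmetric_spectral_decomposition by metis
  interpret eigen_sketch A S U es n k L
    using U AD assms(3,5,6) gap by unfold_locales auto
  have "i \<le> card {l. l < length nus \<and> lam A i - 51 * L \<le> nus ! l}"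
    using card_sketched_eigenvalues_ge[OF V MD lamL cntA] lnus by simp
  thus ?thesis using nth_rev_sort_ge_if_card_ge[OF assms(7)] eigvals_from_spectrum[OF mM] by simp
qed

end
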